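(* For every constant $\alpha>0$ there is a constant $\beta>0$ depending only on $\alpha$ such that the following holds. Let $k \in \mathbb{Z}_+$, $\varepsilon \in (0, 1)$, let $X \subset \mathbb{R}^d$ be a finite data set with $|X|=n$, let $p\in\{1,\dots,n\}$, let $\mathcal{L}$ be a finite collection of lines in $\mathbb{R}^d$, and let $s>0$ and $t_l>0$ for $l\in\mathcal{L}$. Suppose (i) $X$ is partitioned into sets $\{X_l : l \in \mathcal{L}\}$ with $X_l \subseteq l$ for each $l \in \mathcal{L}$, and (ii) for each $l \in \mathcal{L}$, $X_l$ is partitioned into a family $\mathcal{Y}_l$ of sub-intervals (sets of points of $X_l$ that are consecutive in the order along $l$, with pairwise disjoint segments $I(Y)$), such that every $Y \in \mathcal{Y}_l$ satisfies $\mathrm{len}(I(Y)) \leq \alpha\frac{\varepsilon}{p} s$ or $\delta(Y) \leq \alpha\frac{\varepsilon}{k} t_l$. Let $D$ be the multiset consisting of $\mu(Y)$ with multiplicity $|Y|$ for each $Y\in\mathcal{Y}_l$, $l\in\mathcal{L}$. Then for every set $C\subset \mathbb{R}^d$ of $k$ centers, $|\mathrm{cost}_p(D, C) - \mathrm{cost}_p(X, C)| \leq \beta\,\varepsilon \,\big(s + \sum_{l \in \mathcal{L}} t_l\big)$.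
   Context: Distances are Euclidean and $d(x,C):=\min_{c\in C}d(x,c)$. For a finite multiset $Y$ and finite nonempty $C$, $\mathrm{cost}_p(Y,C)$ is the sum of the $p$ largest values of $d(y,C)$, $y\in Y$ (with multiplicity). For a finite set $Y$ of points on a line, $I(Y)$ is the smallest closed segment containing $Y$, $\mathrm{len}(I(Y))$ its length, $\mu(Y):=\frac{1}{|Y|}\sum_{y\in Y}y$ its mean, and $\delta(Y):=\sum_{y\in Y}d(y,\mu(Y))$ its cumulative error. *)

theory Defs
  imports Complex_Main "HOL-Library.Multiset"
begin

text \<open>Points of R^d are represented as functions nat => real vanishing outside
  {..<d}, so that the dimension d can be quantified inside the statement
  (beta must not depend on d).\<close>

type_synonym pt = "nat \<Rightarrow> real"

definition in_Rd :: "nat \<Rightarrow> pt \<Rightarrow> bool" where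
  "in_Rd d x \<longleftrightarrow> (\<forall>i\<ge>d. x i = 0)"

definition edist :: "nat \<Rightarrow> pt \<Rightarrow> pt \<Rightarrow> real" where
  "edist d x y = sqrt (\<Sum>i<d. (x i - y i)^2)"

definition distC :: "nat \<Rightarrow> pt \<Rightarrow> pt set \<Rightarrow> real" where
  "distC d x C = Min (edist d x ` C)"

definition costp :: "nat \<Rightarrow> nat \<Rightarrow> pt multiset \<Rightarrow> pt set \<Rightarrow> real" where
  "costp d p Y C =
     sum_list (take p (rev (sorted_list_of_multiset (image_mset (\<lambda>y. distC d y C) Y))))"

definition is_line :: "nat \<Rightarrow> pt set \<Rightarrow> bool" where
  "is_line d l \<longleftrightarrow> (\<exists>a v. in_Rd d a \<and> in_Rd d v \<and> v \<noteq> (\<lambda>i. 0) \<and>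
      l = {(\<lambda>i. a i + t * v i) | t. True})"

text \<open>I(Y): smallest closed segment containing a finite set Y of collinear points
  (the union of the segments between points of Y).\<close>
definition segI :: "pt set \<Rightarrow> pt set" where
  "segI Y = {z. \<exists>a\<in>Y. \<exists>b\<in>Y. \<exists>t\<in>{0..1::real}. z = (\<lambda>i. (1 - t) * a i + t * b i)}"

definition seglen :: "nat \<Rightarrow> pt set \<Rightarrow> real" where
  "seglen d S = (SUP a\<in>S. SUP b\<in>S. edist d a b)"

definition mu :: "pt set \<Rightarrow> pt" where
  "mu Y = (\<lambda>i. (\<Sum>y\<in>Y. y i) / real (card Y))"

definition delta :: "nat \<Rightarrow> pt set \<Rightarrow> real" where
  "delta d Y = (\<Sum>y\<in>Y. edist d y (mu Y))"

end

theory Submission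
  imports Defs "HOL-Analysis.Convex" "HOL-Analysis.L2_Norm"
begin

(* Send every point of X to the mean of its cluster. Then cost_p(D,C) and cost_p(X,C) are the sums
   of the p largest values over X of x |-> d(mu(Y_x),C) and of x |-> d(x,C), and comparing each
   with the p-subset realizing the other reduces the claim to a bound on
   sum over S of d(x,C) - d(mu(Y_x),C) for threshold sets S: sets of p points on which the
   relevant function is at least some r, with values at most r outside. Such a sum splits into
   lines and clusters.

   Along a line, d(.,C) is the lower envelope of k convex functions with Lipschitz constant |v|.
   A cluster with len(I(Y)) small costs at most |S n Y| len(I(Y)), in total alpha eps s. Any other
   cluster has delta(Y) small. If I(Y) contains a breakpoint (a point where some d(.,c) equals r,
   or an end of a Voronoi cell; at most 3k per line), it costs at most delta(Y). Otherwise Y lies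
   in one cell and entirely inside or outside S, so its cost is the Jensen gap of one convex
   function, at most delta(Y)/2 times the spread of the slopes of d(.,c) over I(Y); since the
   segments are disjoint, these spreads telescope to at most 2|v| for each center. This gives
   beta = 5 alpha. *)

section \<open>Sums of the largest values\<close>

definition top_sum :: "nat \<Rightarrow> ('a \<Rightarrow> real) \<Rightarrow> 'a multiset \<Rightarrow> real" where
  "top_sum p g M = sum_list (take p (rev (sorted_list_of_multiset (image_mset g M))))"

definition top_set :: "nat \<Rightarrow> ('a \<Rightarrow> real) \<Rightarrow> 'a set \<Rightarrow> 'a set \<Rightarrow> bool" where
  "top_set p g X S \<longleftrightarrow> S \<subseteq> X \<and> card S = p \<and> (\<exists>th. (\<forall>x\<in>S. th \<le> g x) \<and> (\<forall>x\<in>X - S. g x \<le> th))"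

lemma top_sum_image_mset: "top_sum p g (image_mset f M) = top_sum p (g \<circ> f) M"
  by (simp add: top_sum_def multiset.map_comp)

lemma top_set_exists:
  assumes "finite X" "0 < p" "p \<le> card X"
  shows "\<exists>S. top_set p g X S \<and> top_sum p g (mset_set X) = sum g S"
proof -
  obtain xs where xs: "distinct xs" "set xs = X" using finite_distinct_list[OF \<open>finite X\<close>] by blast
  define ws where "ws = rev (sort_key g xs)"
  have ws: "distinct ws" "set ws = X" "length ws = card X"
    using xs by (auto simp: ws_def distinct_card[symmetric])
  have "sort (map g xs) = map g (sort_key g xs)"
    by (rule properties_for_sort) (auto simp: sorted_sort_key)
  then have "sorted_list_of_multiset (image_mset g (mset_set X)) = map g (sort_key g xs)"
    by (metis xs mset_map mset_set_set sorted_list_of_multiset_mset)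
  then have top: "take p (rev (sorted_list_of_multiset (image_mset g (mset_set X)))) = map g (take p ws)"
    by (simp add: ws_def rev_map take_map)
  have antitone: "g (ws ! j) \<le> g (ws ! i)" if "i \<le> j" "j < length ws" for i j
  proof -
    have "sorted (map g (sort_key g xs))" by simp
    then show ?thesis
      using that by (auto simp: ws_def rev_nth sorted_iff_nth_mono)
  qed
  define S where "S = set (take p ws)"
  have "\<forall>x\<in>S. g (ws ! (p - 1)) \<le> g x"
    using \<open>0 < p\<close> \<open>p \<le> card X\<close> ws antitone by (auto simp: S_def in_set_conv_nth)
  moreover have "\<forall>x\<in>X - S. g x \<le> g (ws ! (p - 1))"
  proof
    fix x assume x: "x \<in> X - S"
    then obtain j where j: "j < length ws" "x = ws ! j" using ws by (auto simp: in_set_conv_nth)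
    with x have "\<not> j < p" by (auto simp: S_def in_set_conv_nth)
    then show "g x \<le> g (ws ! (p - 1))" using antitone j \<open>0 < p\<close> by simp
  qed
  moreover have "S \<subseteq> X" "card S = p"
    using ws \<open>p \<le> card X\<close> by (auto simp: S_def distinct_card dest: in_set_takeD)
  moreover have "top_sum p g (mset_set X) = sum g S"
    using ws by (simp add: top_sum_def top S_def sum_list_distinct_conv_sum_set)
  ultimately show ?thesis unfolding top_set_def by blast
qed

lemma sum_le_top_set:
  assumes "finite X" "top_set p g X S\<^sub>0" "S \<subseteq> X" "card S = p"
  shows "sum g S \<le> sum g S\<^sub>0"
proof -
  obtain th where "S\<^sub>0 \<subseteq> X" "card S\<^sub>0 = p" "\<forall>x\<in>S\<^sub>0. th \<le> g x" "\<forall>x\<in>X - S\<^sub>0. g x \<le> th"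
    using assms(2) by (auto simp: top_set_def)
  moreover have "finite S" "finite S\<^sub>0" using assms(1,3) \<open>S\<^sub>0 \<subseteq> X\<close> finite_subset by auto
  ultimately have "card (S - S\<^sub>0) = card (S\<^sub>0 - S)"
    using \<open>card S = p\<close> by (metis card_Diff_subset_Int inf_commute finite_Int)
  have "sum g (S - S\<^sub>0) \<le> (\<Sum>_\<in>S - S\<^sub>0. th)"
    using \<open>S \<subseteq> X\<close> \<open>\<forall>x\<in>X - S\<^sub>0. g x \<le> th\<close> by (intro sum_mono) auto
  also have "\<dots> = (\<Sum>_\<in>S\<^sub>0 - S. th)" using \<open>card (S - S\<^sub>0) = card (S\<^sub>0 - S)\<close> by simp
  also have "\<dots> \<le> sum g (S\<^sub>0 - S)" using \<open>\<forall>x\<in>S\<^sub>0. th \<le> g x\<close> by (intro sum_mono) auto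
  finally have "sum g (S - S\<^sub>0) \<le> sum g (S\<^sub>0 - S)" .
  moreover have "sum g S = sum g (S - S\<^sub>0) + sum g (S \<inter> S\<^sub>0)"
    "sum g S\<^sub>0 = sum g (S\<^sub>0 - S) + sum g (S \<inter> S\<^sub>0)"
    using \<open>finite S\<close> \<open>finite S\<^sub>0\<close> by (metis sum.Int_Diff add.commute inf_commute)+
  ultimately show ?thesis by linarith
qed

lemma top_sum_diff_le:
  assumes "finite X" "0 < p" "p \<le> card X"
    and bound: "\<And>S. top_set p f X S \<or> top_set p g X S \<Longrightarrow> \<bar>\<Sum>x\<in>S. f x - g x\<bar> \<le> B"
  shows "\<bar>top_sum p f (mset_set X) - top_sum p g (mset_set X)\<bar> \<le> B"
proof -
  obtain Sf Sg where Sf: "top_set p f X Sf" "top_sum p f (mset_set X) = sum f Sf"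
    and Sg: "top_set p g X Sg" "top_sum p g (mset_set X) = sum g Sg"
    using top_set_exists[OF assms(1-3)] by metis
  have "sum f Sg \<le> sum f Sf" "sum g Sf \<le> sum g Sg"
    using sum_le_top_set[OF \<open>finite X\<close> Sf(1)] sum_le_top_set[OF \<open>finite X\<close> Sg(1)] Sf(1) Sg(1)
    by (auto simp: top_set_def)
  moreover have "\<bar>\<Sum>x\<in>Sf. f x - g x\<bar> \<le> B" "\<bar>\<Sum>x\<in>Sg. f x - g x\<bar> \<le> B"
    using bound Sf(1) Sg(1) by auto
  ultimately show ?thesis
    unfolding Sf(2) Sg(2) sum_subtractf by linarith
qed

section \<open>Slopes of convex functions\<close>

definition slope :: "(real \<Rightarrow> real) \<Rightarrow> real \<Rightarrow> real \<Rightarrow> real" where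
  "slope h a b = (h b - h a) / (b - a)"

lemma slope_commute: "slope h a b = slope h b a"
  unfolding slope_def by (metis minus_divide_divide minus_diff_eq)

lemma slope_times_diff: "slope h a b * (b - a) = h b - h a"
  by (cases "a = b") (simp_all add: slope_def)

lemma abs_slope_le:
  assumes "\<And>u w. \<bar>h u - h w\<bar> \<le> L * \<bar>u - w\<bar>"
  shows "\<bar>slope h a b\<bar> \<le> L"
proof (cases "a = b")
  case True
  have "0 \<le> L" using assms[of 1 0] by (simp add: order_trans[OF abs_ge_zero])
  with True show ?thesis by (simp add: slope_def)
next
  case False
  then show ?thesis
    using assms[of b a] by (simp add: slope_def abs_divide divide_le_eq)
qed

lemma convex_on_slope_mono:
  assumes f: "convex_on I h" and I: "x\<^sub>1 \<in> I" "y\<^sub>2 \<in> I"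
    and le: "x\<^sub>1 \<le> x\<^sub>2" "y\<^sub>1 \<le> y\<^sub>2" and lt: "x\<^sub>1 < y\<^sub>1" "x\<^sub>2 < y\<^sub>2"
  shows "slope h x\<^sub>1 y\<^sub>1 \<le> slope h x\<^sub>2 y\<^sub>2"
proof -
  have slope_eq: "(h a - h b) / (a - b) = slope h a b" for a b
    unfolding slope_def by (metis minus_divide_divide minus_diff_eq)
  have "slope h x\<^sub>1 y\<^sub>1 \<le> slope h x\<^sub>1 y\<^sub>2"
    using convex_on_slope_le(1)[OF f I, of y\<^sub>1] le lt
    by (cases "y\<^sub>1 = y\<^sub>2") (simp_all add: slope_eq)
  also have "\<dots> \<le> slope h x\<^sub>2 y\<^sub>2"
    using convex_on_slope_le(2)[OF f I, of x\<^sub>2] le lt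
    by (cases "x\<^sub>1 = x\<^sub>2") (simp_all add: slope_eq)
  finally show ?thesis .
qed

definition avg :: "real set \<Rightarrow> real" where
  "avg U = \<Sum>U / real (card U)"

lemma sum_diff_avg: "finite U \<Longrightarrow> (\<Sum>u\<in>U. u - avg U) = 0"
  by (cases "U = {}") (simp_all add: sum_subtractf avg_def)

lemma avg_bounds:
  assumes "finite U" "U \<noteq> {}"
  shows "Min U \<le> avg U" "avg U \<le> Max U"
proof -
  have "(\<Sum>_\<in>U. Min U) \<le> (\<Sum>u\<in>U. u)" "(\<Sum>u\<in>U. u) \<le> (\<Sum>_\<in>U. Max U)"
    using assms by (intro sum_mono; simp)+
  moreover have "0 < real (card U)" using assms by (simp add: card_gt_0_iff)
  ultimately show "Min U \<le> avg U" "avg U \<le> Max U"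
    by (simp_all add: avg_def field_simps)
qed

lemma avg_strict_bounds:
  assumes "finite U" "U \<noteq> {}" and lt: "Min U < Max U"
  shows "Min U < avg U" "avg U < Max U"
proof -
  have "Min U \<in> U" "Max U \<in> U" using assms(1,2) by simp_all
  show "Min U < avg U"
  proof (rule ccontr)
    assume "\<not> Min U < avg U"
    moreover have "avg U \<le> u" if "u \<in> U" for u
      using Min_le[OF assms(1) that] \<open>\<not> Min U < avg U\<close> by linarith
    ultimately have "0 < (\<Sum>u\<in>U. u - avg U)"
      using lt \<open>Max U \<in> U\<close> assms(1) by (intro sum_pos2[of U "Max U"]) auto
    then show False using sum_diff_avg[OF assms(1)] by simp
  qed
  show "avg U < Max U"
  proof (rule ccontr)
    assume "\<not> avg U < Max U"
    moreover have "u \<le> avg U" if "u \<in> U" for u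
      using Max_ge[OF assms(1) that] \<open>\<not> avg U < Max U\<close> by linarith
    ultimately have "0 < (\<Sum>u\<in>U. avg U - u)"
      using lt \<open>Min U \<in> U\<close> assms(1) by (intro sum_pos2[of U "Min U"]) auto
    then show False using sum_diff_avg[OF assms(1)] by (simp add: sum_subtractf)
  qed
qed

definition slope_gap :: "(real \<Rightarrow> real) \<Rightarrow> real set \<Rightarrow> real" where
  "slope_gap h U = slope h (avg U) (Max U) - slope h (Min U) (avg U)"

lemma slope_gap_nonneg:
  assumes "convex_on UNIV h" "finite U" "U \<noteq> {}"
  shows "0 \<le> slope_gap h U"
proof (cases "Min U < Max U")
  case True
  then show ?thesis
    using convex_on_slope_mono[OF assms(1)] avg_strict_bounds[OF assms(2,3) True]
    by (simp add: slope_gap_def)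
next
  case False
  then have "avg U = Min U" "avg U = Max U" using avg_bounds[OF assms(2,3)] by linarith+
  then show ?thesis by (simp add: slope_gap_def slope_def)
qed

lemma convex_slope_from_avg_between:
  assumes f: "convex_on UNIV h" and U: "finite U" and u: "u \<in> U" "u \<noteq> avg U"
  shows "slope h (Min U) (avg U) \<le> slope h (avg U) u \<and> slope h (avg U) u \<le> slope h (avg U) (Max U)"
proof -
  define a where "a = avg U"
  have "U \<noteq> {}" using u by auto
  have "Min U \<le> a" "a \<le> Max U" using avg_bounds[OF U \<open>U \<noteq> {}\<close>] by (auto simp: a_def)
  moreover have "Min U \<le> u" "u \<le> Max U" using U u by auto
  moreover have "Min U < Max U" using calculation u(2) by (simp add: a_def)
  ultimately have bounds: "Min U < a" "a < Max U" "Min U \<le> u" "u \<le> Max U"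
    using avg_strict_bounds[OF U \<open>U \<noteq> {}\<close>] by (auto simp: a_def)
  show ?thesis
    unfolding a_def[symmetric]
  proof (cases "u < a")
    case True
    then show "slope h (Min U) a \<le> slope h a u \<and> slope h a u \<le> slope h a (Max U)"
      using convex_on_slope_mono[OF f, where x\<^sub>1 = "Min U" and y\<^sub>1 = a and x\<^sub>2 = u and y\<^sub>2 = a]
        convex_on_slope_mono[OF f, where x\<^sub>1 = u and y\<^sub>1 = a and x\<^sub>2 = a and y\<^sub>2 = "Max U"] bounds
      by (simp add: slope_commute[of h a u])
  next
    case False
    then show "slope h (Min U) a \<le> slope h a u \<and> slope h a u \<le> slope h a (Max U)"
      using convex_on_slope_mono[OF f, where x\<^sub>1 = "Min U" and y\<^sub>1 = a and x\<^sub>2 = a and y\<^sub>2 = u]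
        convex_on_slope_mono[OF f, where x\<^sub>1 = a and y\<^sub>1 = u and x\<^sub>2 = a and y\<^sub>2 = "Max U"] bounds u(2)
      by (simp add: a_def)
  qed
qed

text \<open>With \<open>s\<^sub>u\<close> the slope from \<open>avg U\<close> to \<open>u\<close>, the sum equals \<open>\<Sum>u. (s\<^sub>u - m) (u - avg U)\<close> for every
  constant \<open>m\<close>, and all \<open>s\<^sub>u\<close> lie in an interval of length \<open>slope_gap h U\<close>; take \<open>m\<close> its midpoint.\<close>
lemma convex_sum_deviation_le:
  assumes f: "convex_on UNIV h" and U: "finite U"
  shows "\<bar>\<Sum>u\<in>U. h u - h (avg U)\<bar> \<le> (\<Sum>u\<in>U. \<bar>u - avg U\<bar>) / 2 * slope_gap h U"
proof -
  define a where "a = avg U"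
  define lo where "lo = slope h (Min U) a"
  define hi where "hi = slope h a (Max U)"
  define m where "m = (lo + hi) / 2"
  have slope_between: "lo \<le> slope h a u \<and> slope h a u \<le> hi" if "u \<in> U" "u \<noteq> a" for u
    using convex_slope_from_avg_between[OF f U that[unfolded a_def]] by (simp add: lo_def hi_def a_def)
  have "h u - h a = (slope h a u - m) * (u - a) + m * (u - a)" for u
    by (metis slope_times_diff diff_add_cancel distrib_right)
  then have "(\<Sum>u\<in>U. h u - h a) = (\<Sum>u\<in>U. (slope h a u - m) * (u - a) + m * (u - a))"
    by simp
  also have "\<dots> = (\<Sum>u\<in>U. (slope h a u - m) * (u - a)) + m * (\<Sum>u\<in>U. u - a)"
    by (simp add: sum.distrib sum_distrib_left)
  also have "\<dots> = (\<Sum>u\<in>U. (slope h a u - m) * (u - a))"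
    using sum_diff_avg[OF U] by (simp add: a_def)
  finally have "\<bar>\<Sum>u\<in>U. h u - h a\<bar> \<le> (\<Sum>u\<in>U. \<bar>slope h a u - m\<bar> * \<bar>u - a\<bar>)"
    by (simp add: abs_mult sum_abs[THEN order_trans])
  also have "\<dots> \<le> (\<Sum>u\<in>U. (hi - lo) / 2 * \<bar>u - a\<bar>)"
  proof (rule sum_mono)
    fix u assume "u \<in> U"
    show "\<bar>slope h a u - m\<bar> * \<bar>u - a\<bar> \<le> (hi - lo) / 2 * \<bar>u - a\<bar>"
    proof (cases "u = a")
      case False
      then have "\<bar>slope h a u - m\<bar> \<le> (hi - lo) / 2"
        using slope_between[OF \<open>u \<in> U\<close> False] by (auto simp: m_def abs_le_iff divide_simps)
      then show ?thesis by (rule mult_right_mono) simp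
    qed simp
  qed
  also have "\<dots> = (\<Sum>u\<in>U. \<bar>u - a\<bar>) / 2 * (hi - lo)"
    by (simp add: sum_distrib_left sum_distrib_right sum_divide_distrib algebra_simps)
  finally show ?thesis
    by (simp add: a_def lo_def hi_def slope_gap_def)
qed

lemma sum_chained_diffs_le:
  fixes key lo hi :: "'a \<Rightarrow> real"
  assumes "finite F" "inj_on key F"
    and chained: "\<And>x y. x \<in> F \<Longrightarrow> y \<in> F \<Longrightarrow> key x < key y \<Longrightarrow> hi x \<le> lo y"
    and bounds: "\<And>x. x \<in> F \<Longrightarrow> -B \<le> lo x" "\<And>x. x \<in> F \<Longrightarrow> hi x \<le> B" and "0 \<le> B"
  shows "(\<Sum>x\<in>F. hi x - lo x) \<le> 2 * B"
proof -
  have "G \<subseteq> F \<Longrightarrow> -B \<le> z \<Longrightarrow> (\<forall>y\<in>G. hi y \<le> z) \<Longrightarrow> (\<Sum>x\<in>G. hi x - lo x) \<le> z + B"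
    if "finite G" for G z
    using that
  proof (induction G arbitrary: z rule: finite_ranking_induct[where f = key])
    case (insert x G)
    show ?case
    proof (cases "x \<in> G")
      case False
      have "\<forall>y\<in>G. hi y \<le> lo x"
      proof
        fix y assume "y \<in> G"
        with insert.hyps(2) insert.prems(1) False have "key y < key x"
          using \<open>inj_on key F\<close> by (metis inj_onD insert_subset order_le_less subsetD)
        then show "hi y \<le> lo x" using chained \<open>y \<in> G\<close> insert.prems(1) by blast
      qed
      then have "(\<Sum>x\<in>G. hi x - lo x) \<le> lo x + B"
        using insert.IH[of "lo x"] insert.prems(1) bounds(1) by blast
      with False insert.hyps(1) insert.prems(3) show ?thesis by simp
    qed (use insert in \<open>simp add: insert_absorb\<close>)
  qed simp
  from this[OF \<open>finite F\<close> order_refl, of B] show ?thesis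
    using bounds(2) \<open>0 \<le> B\<close> by simp
qed

lemma sum_slope_gaps_le:
  fixes U :: "'i \<Rightarrow> real set"
  assumes f: "convex_on UNIV h" and lip: "\<And>u w. \<bar>h u - h w\<bar> \<le> L * \<bar>u - w\<bar>"
    and "finite I" and U: "\<And>i. i \<in> I \<Longrightarrow> finite (U i) \<and> U i \<noteq> {}"
    and disj: "\<And>i j. i \<in> I \<Longrightarrow> j \<in> I \<Longrightarrow> i \<noteq> j \<Longrightarrow>
                 {Min (U i)..Max (U i)} \<inter> {Min (U j)..Max (U j)} = {}"
  shows "(\<Sum>i\<in>I. slope_gap h (U i)) \<le> 2 * L"
proof -
  define I' where "I' = {i \<in> I. Min (U i) < Max (U i)}"
  have degenerate: "slope_gap h (U i) = 0" if "i \<in> I - I'" for i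
  proof -
    have "finite (U i)" "U i \<noteq> {}" "\<not> Min (U i) < Max (U i)" using that U by (auto simp: I'_def)
    then have "avg (U i) = Min (U i)" "avg (U i) = Max (U i)"
      using avg_bounds[of "U i"] Min_le[of "U i" "Max (U i)"] by auto
    then show ?thesis by (simp add: slope_gap_def slope_def)
  qed
  have strict: "Min (U i) < avg (U i)" "avg (U i) < Max (U i)" if "i \<in> I'" for i
    using avg_strict_bounds[of "U i"] that U by (simp_all add: I'_def)
  have ordered: "Max (U i) < Min (U j)" if "i \<in> I'" "j \<in> I'" "Min (U i) < Min (U j)" for i j
    using disj[of i j] that by (fastforce simp: I'_def)
  have "(\<Sum>i\<in>I. slope_gap h (U i)) = (\<Sum>i\<in>I'. slope_gap h (U i))"
    using degenerate \<open>finite I\<close> by (intro sum.mono_neutral_right) (auto simp: I'_def)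
  also have "\<dots> \<le> 2 * L"
    unfolding slope_gap_def
  proof (rule sum_chained_diffs_le[where key = "\<lambda>i. Min (U i)"])
    show "finite I'" using \<open>finite I\<close> by (simp add: I'_def)
    show "inj_on (\<lambda>i. Min (U i)) I'"
      using disj by (fastforce simp: I'_def intro!: inj_onI)
    show "slope h (avg (U i)) (Max (U i)) \<le> slope h (Min (U j)) (avg (U j))"
      if "i \<in> I'" "j \<in> I'" "Min (U i) < Min (U j)" for i j
      using convex_on_slope_mono[OF f] strict[OF that(1)] strict[OF that(2)] ordered[OF that] by simp
    show "-L \<le> slope h (Min (U i)) (avg (U i))" "slope h (avg (U i)) (Max (U i)) \<le> L" for i
      using abs_slope_le[OF lip, of "Min (U i)" "avg (U i)"] abs_slope_le[OF lip, of "avg (U i)" "Max (U i)"]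
      by (simp_all add: abs_le_iff)
    show "0 \<le> L" using lip[of 1 0] by (simp add: order_trans[OF abs_ge_zero])
  qed
  finally show ?thesis .
qed

section \<open>Lower envelopes of convex functions on the line\<close>

lemma card_disjoint_hitting_le:
  assumes "finite Z" and hit: "\<And>i. i \<in> I \<Longrightarrow> J i \<inter> Z \<noteq> {}"
    and disj: "\<And>i j. i \<in> I \<Longrightarrow> j \<in> I \<Longrightarrow> i \<noteq> j \<Longrightarrow> J i \<inter> J j = {}"
  shows "card I \<le> card Z"
proof -
  define f where "f i = (SOME z. z \<in> J i \<inter> Z)" for i
  have f: "f i \<in> J i \<inter> Z" if "i \<in> I" for i
    unfolding f_def using hit[OF that] by (intro someI_ex[where P = "\<lambda>z. z \<in> J i \<inter> Z"]) blast
  have "inj_on f I"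
  proof (rule inj_onI)
    fix i j assume "i \<in> I" "j \<in> I" "f i = f j"
    then have "f i \<in> J i \<inter> J j" using f[OF \<open>i \<in> I\<close>] f[OF \<open>j \<in> I\<close>] by simp
    then show "i = j" using disj[OF \<open>i \<in> I\<close> \<open>j \<in> I\<close>] by blast
  qed
  moreover have "f ` I \<subseteq> Z" using f by blast
  ultimately show ?thesis by (rule card_inj_on_le[OF _ _ \<open>finite Z\<close>])
qed

text \<open>The model is the family of distances \<open>u \<mapsto> d(a + u v, c)\<close>, \<open>c \<in> C\<close>, along a line,
  with \<open>L = |v|\<close>.\<close>
locale lower_envelope =
  fixes C :: "'c set" and h :: "'c \<Rightarrow> real \<Rightarrow> real" and L :: real
  assumes finite_C: "finite C" and C_nonempty: "C \<noteq> {}"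
    and convex: "\<And>c. c \<in> C \<Longrightarrow> convex_on UNIV (h c)"
    and lipschitz: "\<And>c u w. c \<in> C \<Longrightarrow> \<bar>h c u - h c w\<bar> \<le> L * \<bar>u - w\<bar>"
    and level_sets: "\<And>c r. c \<in> C \<Longrightarrow> finite {u. h c u = r} \<and> card {u. h c u = r} \<le> 2"
    and comparison_convex: "\<And>c c' u\<^sub>1 u u\<^sub>2. c \<in> C \<Longrightarrow> c' \<in> C \<Longrightarrow> u\<^sub>1 \<le> u \<Longrightarrow> u \<le> u\<^sub>2 \<Longrightarrow>
       h c u\<^sub>1 \<le> h c' u\<^sub>1 \<Longrightarrow> h c u\<^sub>2 \<le> h c' u\<^sub>2 \<Longrightarrow> h c u \<le> h c' u"
begin

definition env :: "real \<Rightarrow> real" where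
  "env u = Min ((\<lambda>c. h c u) ` C)"

definition cell :: "'c \<Rightarrow> real set" where
  "cell c = {u. \<forall>c'\<in>C. h c u \<le> h c' u}"

lemma L_pos: "0 < L"
proof -
  obtain c where c: "c \<in> C" using C_nonempty by blast
  have "\<bar>h c 1 - h c 0\<bar> \<le> L" using lipschitz[OF c, of 1 0] by simp
  then have "0 \<le> L" by (rule order_trans[OF abs_ge_zero])
  moreover have "L \<noteq> 0"
  proof
    assume "L = 0"
    then have "h c u = h c 0" for u using lipschitz[OF c, of u 0] by simp
    then have "{u. h c u = h c 0} = UNIV" by blast
    then show False using level_sets[OF c, of "h c 0"] infinite_UNIV_char_0[where 'a = real] by simp
  qed
  ultimately show ?thesis by simp
qed

lemma env_le: "c \<in> C \<Longrightarrow> env u \<le> h c u"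
  unfolding env_def using finite_C by simp

lemma env_attained: "\<exists>c\<in>C. env u = h c u"
proof -
  have "env u \<in> (\<lambda>c. h c u) ` C"
    unfolding env_def using finite_C C_nonempty by (intro Min_in) auto
  then show ?thesis by auto
qed

lemma env_eq_on_cell:
  assumes "c \<in> C" "u \<in> cell c"
  shows "env u = h c u"
proof -
  obtain c' where "c' \<in> C" "env u = h c' u" using env_attained by blast
  moreover have "h c u \<le> h c' u" using assms(2) \<open>c' \<in> C\<close> by (simp add: cell_def)
  ultimately show ?thesis using env_le[OF assms(1), of u] by linarith
qed

lemma in_some_cell: "\<exists>c\<in>C. u \<in> cell c"
proof -
  obtain c where c: "c \<in> C" "env u = h c u" using env_attained by blast
  then have "h c u \<le> h c' u" if "c' \<in> C" for c' using env_le[OF that, of u] by simp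
  then show ?thesis using c(1) by (auto simp: cell_def)
qed

lemma env_lipschitz: "\<bar>env u - env w\<bar> \<le> L * \<bar>u - w\<bar>"
proof -
  have "env u \<le> env w + L * \<bar>u - w\<bar>" for u w
  proof -
    obtain c where c: "c \<in> C" "w \<in> cell c" using in_some_cell by blast
    have "env u \<le> h c u" by (rule env_le[OF c(1)])
    also have "\<dots> \<le> h c w + L * \<bar>u - w\<bar>" using lipschitz[OF c(1), of u w] by linarith
    finally show ?thesis using env_eq_on_cell[OF c] by simp
  qed
  from this[of u w] this[of w u] show ?thesis by (auto simp: abs_le_iff abs_minus_commute)
qed

lemma cell_interval:
  assumes "c \<in> C" "u\<^sub>1 \<in> cell c" "u\<^sub>2 \<in> cell c" "u\<^sub>1 \<le> u" "u \<le> u\<^sub>2"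
  shows "u \<in> cell c"
  using assms(2,3) comparison_convex[OF assms(1) _ assms(4,5)] by (simp add: cell_def)

text \<open>For a cell that is unbounded above, \<open>Sup\<close> is an unspecified real; counting it as a
  breakpoint is harmless.\<close>
definition breakpoints :: "real \<Rightarrow> real set" where
  "breakpoints r = (\<Union>c\<in>C. {u. h c u = r}) \<union> (\<lambda>c. Sup (cell c)) ` C"

lemma card_breakpoints: "finite (breakpoints r) \<and> card (breakpoints r) \<le> 3 * card C"
proof -
  have "card (\<Union>c\<in>C. {u. h c u = r}) \<le> (\<Sum>c\<in>C. card {u. h c u = r})"
    by (rule card_UN_le[OF finite_C])
  also have "\<dots> \<le> (\<Sum>c\<in>C. 2)" using level_sets by (intro sum_mono) simp
  finally have "card (\<Union>c\<in>C. {u. h c u = r}) \<le> 2 * card C" by simp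
  moreover have "card ((\<lambda>c. Sup (cell c)) ` C) \<le> card C" by (rule card_image_le[OF finite_C])
  moreover have "card (breakpoints r) \<le> card (\<Union>c\<in>C. {u. h c u = r}) + card ((\<lambda>c. Sup (cell c)) ` C)"
    unfolding breakpoints_def by (rule card_Un_le)
  moreover have "finite (breakpoints r)"
    using finite_C level_sets by (simp add: breakpoints_def)
  ultimately show ?thesis by linarith
qed

lemma interval_in_cell:
  assumes no_break: "{lo..hi} \<inter> breakpoints r = {}"
  shows "\<exists>c\<in>C. {lo..hi} \<subseteq> cell c"
proof -
  obtain c where c: "c \<in> C" "lo \<in> cell c" using in_some_cell by blast
  have "{lo..hi} \<subseteq> cell c"
  proof (rule ccontr)
    assume "\<not> {lo..hi} \<subseteq> cell c"
    then obtain z where "z \<in> {lo..hi}" "z \<notin> cell c" by blast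
    then have z: "lo \<le> z" "z \<le> hi" "z \<notin> cell c" by auto
    have below: "w < z" if "w \<in> cell c" for w
      using cell_interval[OF c(1,2) that z(1)] z(3) not_le by blast
    then have "bdd_above (cell c)" by (meson bdd_above.unfold less_imp_le)
    then have "lo \<le> Sup (cell c)" "Sup (cell c) \<le> z"
      using c(2) below by (auto intro: cSup_upper cSup_least less_imp_le)
    then have "Sup (cell c) \<in> {lo..hi} \<inter> breakpoints r"
      using z c(1) by (auto simp: breakpoints_def)
    then show False using no_break by blast
  qed
  then show ?thesis using c(1) by blast
qed

lemma cluster_error_le: "\<bar>\<Sum>u\<in>S. env u - env (avg U)\<bar> \<le> (\<Sum>u\<in>S. L * \<bar>u - avg U\<bar>)"
proof -
  have "\<bar>\<Sum>u\<in>S. env u - env (avg U)\<bar> \<le> (\<Sum>u\<in>S. \<bar>env u - env (avg U)\<bar>)" by (rule sum_abs)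
  also have "\<dots> \<le> (\<Sum>u\<in>S. L * \<bar>u - avg U\<bar>)" by (rule sum_mono) (rule env_lipschitz)
  finally show ?thesis .
qed

lemma cluster_error_le_width:
  assumes "S \<subseteq> U" "finite U" "U \<noteq> {}"
  shows "\<bar>\<Sum>u\<in>S. env u - env (avg U)\<bar> \<le> card S * (L * (Max U - Min U))"
proof -
  have "L * \<bar>u - avg U\<bar> \<le> L * (Max U - Min U)" if "u \<in> S" for u
  proof (rule mult_left_mono)
    have "Min U \<le> u" "u \<le> Max U" using that assms(1,2) by auto
    then show "\<bar>u - avg U\<bar> \<le> Max U - Min U" using avg_bounds[OF assms(2,3)] by linarith
  qed (use L_pos in simp)
  then have "(\<Sum>u\<in>S. L * \<bar>u - avg U\<bar>) \<le> (\<Sum>u\<in>S. L * (Max U - Min U))" by (rule sum_mono)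
  then show ?thesis using cluster_error_le[where S = S and U = U] by simp
qed

lemma cluster_error_le_spread:
  assumes "S \<subseteq> U" "finite U"
  shows "\<bar>\<Sum>u\<in>S. env u - env (avg U)\<bar> \<le> L * (\<Sum>u\<in>U. \<bar>u - avg U\<bar>)"
proof -
  have "(\<Sum>u\<in>S. L * \<bar>u - avg U\<bar>) \<le> (\<Sum>u\<in>U. L * \<bar>u - avg U\<bar>)"
    using assms L_pos by (intro sum_mono2) auto
  then show ?thesis
    using cluster_error_le[where S = S and U = U] by (simp add: sum_distrib_left)
qed

text \<open>Without breakpoints in its hull, a cluster lies entirely on one side of the threshold and
  the envelope is a single convex function on its hull.\<close>
lemma cluster_error_unbroken:
  assumes "S \<subseteq> U" "finite U" "U \<noteq> {}"
    and no_break: "{Min U..Max U} \<inter> breakpoints r = {}"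
    and threshold: "S \<noteq> {} \<Longrightarrow> S \<noteq> U \<Longrightarrow> \<exists>c\<in>C. \<exists>u\<in>{Min U..Max U}. h c u = r"
  shows "\<bar>\<Sum>u\<in>S. env u - env (avg U)\<bar> \<le> (\<Sum>u\<in>U. \<bar>u - avg U\<bar>) / 2 * (\<Sum>c\<in>C. slope_gap (h c) U)"
proof -
  have gaps: "0 \<le> slope_gap (h c) U" if "c \<in> C" for c
    using slope_gap_nonneg[OF convex[OF that] assms(2,3)] .
  have "S = {} \<or> S = U"
  proof (rule ccontr)
    assume "\<not> (S = {} \<or> S = U)"
    then obtain c u where "c \<in> C" "u \<in> {Min U..Max U}" "h c u = r" using threshold by blast
    then have "u \<in> {Min U..Max U} \<inter> breakpoints r" by (auto simp: breakpoints_def)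
    then show False using no_break by blast
  qed
  then show ?thesis
  proof
    assume "S = {}"
    then show ?thesis using gaps by (simp add: sum_nonneg)
  next
    assume "S = U"
    obtain c where c: "c \<in> C" "{Min U..Max U} \<subseteq> cell c"
      using interval_in_cell[OF no_break] by blast
    have "\<And>u. u \<in> U \<Longrightarrow> u \<in> cell c" "avg U \<in> cell c"
      using c(2) avg_bounds[OF assms(2,3)] assms(2) by auto
    then have "(\<Sum>u\<in>S. env u - env (avg U)) = (\<Sum>u\<in>U. h c u - h c (avg U))"
      using env_eq_on_cell[OF c(1)] \<open>S = U\<close> by simp
    also note convex_sum_deviation_le[OF convex[OF c(1)] assms(2)]
    also have "(\<Sum>u\<in>U. \<bar>u - avg U\<bar>) / 2 * slope_gap (h c) U
        \<le> (\<Sum>u\<in>U. \<bar>u - avg U\<bar>) / 2 * (\<Sum>c\<in>C. slope_gap (h c) U)"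
      using gaps c(1) finite_C by (intro mult_left_mono member_le_sum) (auto simp: sum_nonneg)
    finally show ?thesis .
  qed
qed

lemma cluster_error_le_cases:
  fixes w T :: real
  assumes "S \<subseteq> U" "finite U" "U \<noteq> {}"
    and threshold: "S \<noteq> {} \<Longrightarrow> S \<noteq> U \<Longrightarrow> \<exists>c\<in>C. \<exists>u\<in>{Min U..Max U}. h c u = r"
    and small: "L * (Max U - Min U) \<le> w \<or> L * (\<Sum>u\<in>U. \<bar>u - avg U\<bar>) \<le> T"
    and "0 \<le> w" "0 \<le> T"
  shows "\<bar>\<Sum>u\<in>S. env u - env (avg U)\<bar>
           \<le> (if L * (Max U - Min U) \<le> w then card S * w else 0)
             + (if {Min U..Max U} \<inter> breakpoints r \<noteq> {} then T else 0)
             + T / (2 * L) * (\<Sum>c\<in>C. slope_gap (h c) U)"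
proof -
  have "0 < L" by (rule L_pos)
  have gaps: "0 \<le> (\<Sum>c\<in>C. slope_gap (h c) U)"
    using slope_gap_nonneg[OF convex] assms(2,3) by (intro sum_nonneg) blast
  then have nonneg: "0 \<le> T / (2 * L) * (\<Sum>c\<in>C. slope_gap (h c) U)"
    using \<open>0 \<le> T\<close> \<open>0 < L\<close> by simp
  have "0 \<le> (if {Min U..Max U} \<inter> breakpoints r \<noteq> {} then T else 0)" using \<open>0 \<le> T\<close> by simp
  consider (short) "L * (Max U - Min U) \<le> w"
    | (broken) "\<not> L * (Max U - Min U) \<le> w" "{Min U..Max U} \<inter> breakpoints r \<noteq> {}"
    | (unbroken) "\<not> L * (Max U - Min U) \<le> w" "{Min U..Max U} \<inter> breakpoints r = {}"
    by blast
  then show ?thesis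
  proof cases
    case short
    then have "card S * (L * (Max U - Min U)) \<le> card S * w" by (intro mult_left_mono) simp_all
    then have "\<bar>\<Sum>u\<in>S. env u - env (avg U)\<bar> \<le> card S * w"
      using cluster_error_le_width[OF assms(1-3)] by linarith
    then show ?thesis
      unfolding if_P[OF short] using nonneg \<open>0 \<le> (if _ then T else 0)\<close> by linarith
  next
    case broken
    then have "\<bar>\<Sum>u\<in>S. env u - env (avg U)\<bar> \<le> T"
      using cluster_error_le_spread[OF assms(1,2)] small by linarith
    then show ?thesis
      unfolding if_not_P[OF broken(1)] if_P[OF broken(2)] using nonneg by linarith
  next
    case unbroken
    then have "(\<Sum>u\<in>U. \<bar>u - avg U\<bar>) / 2 \<le> T / (2 * L)"
      using small \<open>0 < L\<close> by (auto simp: field_simps)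
    then have "(\<Sum>u\<in>U. \<bar>u - avg U\<bar>) / 2 * (\<Sum>c\<in>C. slope_gap (h c) U)
        \<le> T / (2 * L) * (\<Sum>c\<in>C. slope_gap (h c) U)"
      using gaps by (rule mult_right_mono)
    then show ?thesis
      using cluster_error_unbroken[OF assms(1-3) unbroken(2) threshold] unbroken by simp
  qed
qed

lemma card_broken_clusters_le:
  fixes U :: "'i \<Rightarrow> real set"
  assumes disjoint: "\<And>i j. i \<in> I \<Longrightarrow> j \<in> I \<Longrightarrow> i \<noteq> j \<Longrightarrow>
                       {Min (U i)..Max (U i)} \<inter> {Min (U j)..Max (U j)} = {}"
  shows "card {i \<in> I. {Min (U i)..Max (U i)} \<inter> breakpoints r \<noteq> {}} \<le> 3 * card C"
proof -
  have "card {i \<in> I. {Min (U i)..Max (U i)} \<inter> breakpoints r \<noteq> {}} \<le> card (breakpoints r)"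
  proof (rule card_disjoint_hitting_le[where J = "\<lambda>i. {Min (U i)..Max (U i)}"])
    show "finite (breakpoints r)" using card_breakpoints by blast
    show "{Min (U i)..Max (U i)} \<inter> {Min (U j)..Max (U j)} = {}"
      if "i \<in> {i \<in> I. {Min (U i)..Max (U i)} \<inter> breakpoints r \<noteq> {}}"
        "j \<in> {i \<in> I. {Min (U i)..Max (U i)} \<inter> breakpoints r \<noteq> {}}" "i \<noteq> j" for i j
      using disjoint that by blast
  qed simp
  then show ?thesis using card_breakpoints[of r] by linarith
qed

lemma envelope_error_le:
  fixes U S :: "'i \<Rightarrow> real set" and w T :: real
  assumes "finite I"
    and U: "\<And>i. i \<in> I \<Longrightarrow> finite (U i) \<and> U i \<noteq> {}"
    and disjoint: "\<And>i j. i \<in> I \<Longrightarrow> j \<in> I \<Longrightarrow> i \<noteq> j \<Longrightarrow>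
                     {Min (U i)..Max (U i)} \<inter> {Min (U j)..Max (U j)} = {}"
    and S: "\<And>i. i \<in> I \<Longrightarrow> S i \<subseteq> U i"
    and threshold: "\<And>i. i \<in> I \<Longrightarrow> S i \<noteq> {} \<Longrightarrow> S i \<noteq> U i \<Longrightarrow>
                      \<exists>c\<in>C. \<exists>u\<in>{Min (U i)..Max (U i)}. h c u = r"
    and small: "\<And>i. i \<in> I \<Longrightarrow> L * (Max (U i) - Min (U i)) \<le> w \<or> L * (\<Sum>u\<in>U i. \<bar>u - avg (U i)\<bar>) \<le> T"
    and "0 \<le> w" "0 \<le> T"
  shows "(\<Sum>i\<in>I. \<bar>\<Sum>u\<in>S i. env u - env (avg (U i))\<bar>) \<le> (\<Sum>i\<in>I. card (S i) * w) + 4 * card C * T"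
proof -
  define short where "short i \<longleftrightarrow> L * (Max (U i) - Min (U i)) \<le> w" for i
  define broken where "broken i \<longleftrightarrow> {Min (U i)..Max (U i)} \<inter> breakpoints r \<noteq> {}" for i
  define gaps where "gaps i = (\<Sum>c\<in>C. slope_gap (h c) (U i))" for i
  have "0 < L" by (rule L_pos)
  have short_total: "(\<Sum>i\<in>I. if short i then card (S i) * w else 0) \<le> (\<Sum>i\<in>I. card (S i) * w)"
    using \<open>0 \<le> w\<close> by (intro sum_mono) simp
  have "(\<Sum>i\<in>I. if broken i then T else 0) = card {i \<in> I. broken i} * T"
    using \<open>finite I\<close> by (simp add: sum.If_cases Int_def)
  also have "\<dots> \<le> 3 * card C * T"
    using card_broken_clusters_le[where I = I and U = U and r = r, OF disjoint] \<open>0 \<le> T\<close>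
    unfolding broken_def by (intro mult_right_mono) simp_all
  finally have broken_total: "(\<Sum>i\<in>I. if broken i then T else 0) \<le> 3 * card C * T" .
  have "(\<Sum>i\<in>I. T / (2 * L) * gaps i) = T / (2 * L) * (\<Sum>c\<in>C. \<Sum>i\<in>I. slope_gap (h c) (U i))"
    by (simp add: gaps_def sum_distrib_left sum.swap[of _ I])
  also have "\<dots> \<le> T / (2 * L) * (\<Sum>c\<in>C. 2 * L)"
    using sum_slope_gaps_le[OF convex lipschitz \<open>finite I\<close> U disjoint] \<open>0 \<le> T\<close> \<open>0 < L\<close>
    by (intro mult_left_mono sum_mono) auto
  also have "\<dots> = card C * T" using \<open>0 < L\<close> by simp
  finally have gap_total: "(\<Sum>i\<in>I. T / (2 * L) * gaps i) \<le> card C * T" .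
  have "(\<Sum>i\<in>I. \<bar>\<Sum>u\<in>S i. env u - env (avg (U i))\<bar>)
      \<le> (\<Sum>i\<in>I. (if short i then card (S i) * w else 0) + (if broken i then T else 0) + T / (2 * L) * gaps i)"
    unfolding short_def broken_def gaps_def
  proof (rule sum_mono)
    fix i assume i: "i \<in> I"
    show "\<bar>\<Sum>u\<in>S i. env u - env (avg (U i))\<bar>
        \<le> (if L * (Max (U i) - Min (U i)) \<le> w then card (S i) * w else 0)
          + (if {Min (U i)..Max (U i)} \<inter> breakpoints r \<noteq> {} then T else 0)
          + T / (2 * L) * (\<Sum>c\<in>C. slope_gap (h c) (U i))"
      using U[OF i] by (intro cluster_error_le_cases S i threshold small \<open>0 \<le> w\<close> \<open>0 \<le> T\<close>) auto
  qed
  also have "\<dots> = (\<Sum>i\<in>I. if short i then card (S i) * w else 0) + (\<Sum>i\<in>I. if broken i then T else 0)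
      + (\<Sum>i\<in>I. T / (2 * L) * gaps i)"
    by (simp add: sum.distrib)
  finally show ?thesis using short_total broken_total gap_total by linarith
qed

end

section \<open>Distances along a line\<close>

definition line_point :: "pt \<Rightarrow> pt \<Rightarrow> real \<Rightarrow> pt" where
  "line_point a v u = (\<lambda>i. a i + u * v i)"

definition enorm :: "nat \<Rightarrow> pt \<Rightarrow> real" where
  "enorm d v = sqrt (\<Sum>i<d. (v i)^2)"

lemma edist_eq_L2_set: "edist d x y = L2_set (\<lambda>i. x i - y i) {..<d}"
  by (simp add: edist_def L2_set_def)

lemma edist_triangle: "edist d x z \<le> edist d x y + edist d y z"
proof -
  have "edist d x z = L2_set (\<lambda>i. (x i - y i) + (y i - z i)) {..<d}"
    by (simp add: edist_eq_L2_set)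
  also have "\<dots> \<le> edist d x y + edist d y z"
    unfolding edist_eq_L2_set by (rule L2_set_triangle_ineq)
  finally show ?thesis .
qed

lemma distC_le: "finite C \<Longrightarrow> c \<in> C \<Longrightarrow> distC d x C \<le> edist d x c"
  by (simp add: distC_def)

lemma distC_attained:
  assumes "finite C" "C \<noteq> {}"
  shows "\<exists>c\<in>C. distC d x C = edist d x c"
proof -
  have "distC d x C \<in> edist d x ` C" unfolding distC_def using assms by (intro Min_in) auto
  then show ?thesis by auto
qed

lemma edist_line_point: "edist d (line_point a v u) (line_point a v w) = enorm d v * \<bar>u - w\<bar>"
proof -
  have "(\<Sum>i<d. (line_point a v u i - line_point a v w i)^2) = (\<Sum>i<d. (u - w)^2 * (v i)^2)"
    by (rule sum.cong) (auto simp: line_point_def power_mult_distrib[symmetric] algebra_simps)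
  also have "\<dots> = (u - w)^2 * (\<Sum>i<d. (v i)^2)" by (simp add: sum_distrib_left)
  finally show ?thesis by (simp add: edist_def enorm_def real_sqrt_mult mult.commute)
qed

lemma enorm_pos:
  assumes "in_Rd d v" "v \<noteq> (\<lambda>i. 0)"
  shows "0 < enorm d v"
proof -
  obtain i where i: "v i \<noteq> 0" using assms(2) by auto
  then have "i < d" using assms(1) unfolding in_Rd_def by (meson not_le)
  then have "(v i)^2 \<le> (\<Sum>j<d. (v j)^2)"
    using member_le_sum[of i "{..<d}" "\<lambda>j. (v j)^2"] by simp
  moreover have "0 < (v i)^2" using i by simp
  ultimately have "0 < (\<Sum>j<d. (v j)^2)" by linarith
  then show ?thesis unfolding enorm_def by simp
qed

lemma is_line_parametrization:
  assumes "is_line d l"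
  obtains a v where "l = range (line_point a v)" "0 < enorm d v"
proof -
  obtain a v where "in_Rd d v" "v \<noteq> (\<lambda>i. 0)" "l = {(\<lambda>i. a i + t * v i) | t. True}"
    using assms unfolding is_line_def by blast
  moreover have "{(\<lambda>i. a i + t * v i) | t. True} = range (line_point a v)"
    by (auto simp: line_point_def)
  ultimately show ?thesis using that enorm_pos by metis
qed

lemma inj_line_point:
  assumes "0 < enorm d v"
  shows "inj (line_point a v)"
proof (rule injI)
  fix u w assume "line_point a v u = line_point a v w"
  then have "enorm d v * \<bar>u - w\<bar> = 0" using edist_line_point[of d a v u w] by (simp add: edist_def)
  then show "u = w" using assms by simp
qed

lemma line_point_convex_combination:
  "line_point a v ((1 - t) * x + t * y) = (\<lambda>i. (1 - t) * line_point a v x i + t * line_point a v y i)"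
  by (simp add: line_point_def algebra_simps)

lemma convex_edist_line_point: "convex_on UNIV (\<lambda>u. edist d (line_point a v u) c)"
proof (rule convex_onI)
  fix t x y :: real assume t: "0 < t" "t < 1"
  have "edist d (line_point a v ((1 - t) *\<^sub>R x + t *\<^sub>R y)) c
      = L2_set (\<lambda>i. (1 - t) * (line_point a v x i - c i) + t * (line_point a v y i - c i)) {..<d}"
    unfolding edist_eq_L2_set by (rule L2_set_cong) (auto simp: line_point_def algebra_simps)
  also have "\<dots> \<le> L2_set (\<lambda>i. (1 - t) * (line_point a v x i - c i)) {..<d}
      + L2_set (\<lambda>i. t * (line_point a v y i - c i)) {..<d}"
    by (rule L2_set_triangle_ineq)
  also have "\<dots> = (1 - t) * edist d (line_point a v x) c + t * edist d (line_point a v y) c"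
    unfolding edist_eq_L2_set using t by (simp add: L2_set_right_distrib)
  finally show "edist d (line_point a v ((1 - t) *\<^sub>R x + t *\<^sub>R y)) c
      \<le> (1 - t) * edist d (line_point a v x) c + t * edist d (line_point a v y) c" .
qed simp

lemma lipschitz_edist_line_point:
  "\<bar>edist d (line_point a v u) c - edist d (line_point a v w) c\<bar> \<le> enorm d v * \<bar>u - w\<bar>"
  using edist_triangle[where d = d and x = "line_point a v u" and y = "line_point a v w" and z = c]
    edist_triangle[where d = d and x = "line_point a v w" and y = "line_point a v u" and z = c]
    edist_line_point[of d a v u w] edist_line_point[of d a v w u]
  by (auto simp: abs_minus_commute)

lemma edist_line_point_squared:
  "(edist d (line_point a v u) c)^2
     = (enorm d v)^2 * u^2 + 2 * (\<Sum>i<d. v i * (a i - c i)) * u + (\<Sum>i<d. (a i - c i)^2)"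
proof -
  have "(edist d (line_point a v u) c)^2 = (\<Sum>i<d. (line_point a v u i - c i)^2)"
    unfolding edist_def by (simp add: sum_nonneg)
  also have "\<dots> = (\<Sum>i<d. u^2 * (v i)^2 + 2 * u * (v i * (a i - c i)) + (a i - c i)^2)"
    by (rule sum.cong) (auto simp: line_point_def power2_eq_square algebra_simps)
  also have "\<dots> = u^2 * (\<Sum>i<d. (v i)^2) + 2 * u * (\<Sum>i<d. v i * (a i - c i)) + (\<Sum>i<d. (a i - c i)^2)"
    by (simp add: sum.distrib sum_distrib_left)
  also have "\<dots> = (enorm d v)^2 * u^2 + 2 * (\<Sum>i<d. v i * (a i - c i)) * u + (\<Sum>i<d. (a i - c i)^2)"
    by (simp add: enorm_def sum_nonneg)
  finally show ?thesis .
qed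

lemma level_set_edist_line_point:
  assumes "0 < enorm d v"
  shows "finite {u. edist d (line_point a v u) c = r} \<and> card {u. edist d (line_point a v u) c = r} \<le> 2"
proof (cases "{u. edist d (line_point a v u) c = r} = {}")
  case False
  then obtain u\<^sub>0 where u\<^sub>0: "edist d (line_point a v u\<^sub>0) c = r" by auto
  define A where "A = (enorm d v)^2"
  define B where "B = (\<Sum>i<d. v i * (a i - c i))"
  have "A > 0" using assms by (simp add: A_def)
  have "{u. edist d (line_point a v u) c = r} \<subseteq> {u\<^sub>0, - 2 * B / A - u\<^sub>0}"
  proof
    fix u assume "u \<in> {u. edist d (line_point a v u) c = r}"
    then have "(edist d (line_point a v u) c)^2 = (edist d (line_point a v u\<^sub>0) c)^2" using u\<^sub>0 by simp
    then have "(u - u\<^sub>0) * (A * (u + u\<^sub>0) + 2 * B) = 0"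
      unfolding edist_line_point_squared A_def B_def by (simp add: algebra_simps power2_eq_square)
    moreover have "A * (u + u\<^sub>0) + 2 * B = 0 \<Longrightarrow> u = - 2 * B / A - u\<^sub>0"
      using \<open>A > 0\<close> by (simp add: field_simps)
    ultimately show "u \<in> {u\<^sub>0, - 2 * B / A - u\<^sub>0}" by auto
  qed
  moreover have "card {u\<^sub>0, - 2 * B / A - u\<^sub>0} \<le> 2" by (simp add: card_insert_if)
  ultimately show ?thesis by (meson card_mono finite.emptyI finite.insertI finite_subset order_trans)
qed simp

lemma edist_line_point_compare:
  assumes "u\<^sub>1 \<le> u" "u \<le> u\<^sub>2"
    and "edist d (line_point a v u\<^sub>1) c \<le> edist d (line_point a v u\<^sub>1) c'"
    and "edist d (line_point a v u\<^sub>2) c \<le> edist d (line_point a v u\<^sub>2) c'"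
  shows "edist d (line_point a v u) c \<le> edist d (line_point a v u) c'"
proof -
  define f where "f w = (edist d (line_point a v w) c)^2 - (edist d (line_point a v w) c')^2" for w
  define A where "A = (\<Sum>i<d. (a i - c i)^2) - (\<Sum>i<d. (a i - c' i)^2)"
  define B where "B = 2 * (\<Sum>i<d. v i * (a i - c i)) - 2 * (\<Sum>i<d. v i * (a i - c' i))"
  have affine: "f w = A + B * w" for w
    unfolding f_def edist_line_point_squared A_def B_def by (simp add: algebra_simps)
  have le_iff: "x \<le> y \<longleftrightarrow> f w \<le> 0"
    if "x = edist d (line_point a v w) c" "y = edist d (line_point a v w) c'" for x y w
    using that unfolding f_def edist_def by (simp add: sum_nonneg)
  have "f u\<^sub>1 \<le> 0" "f u\<^sub>2 \<le> 0" using assms(3,4) le_iff by blast+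
  moreover have "B * u \<le> B * u\<^sub>2 \<or> B * u \<le> B * u\<^sub>1"
    using assms(1,2) by (cases "0 \<le> B") (simp_all add: mult_left_mono mult_left_mono_neg)
  ultimately have "f u \<le> 0" unfolding affine by linarith
  then show ?thesis using le_iff by blast
qed

lemma lower_envelope_line:
  assumes "0 < enorm d v" "finite C" "C \<noteq> {}"
  shows "lower_envelope C (\<lambda>c u. edist d (line_point a v u) c) (enorm d v)"
  using assms convex_edist_line_point lipschitz_edist_line_point level_set_edist_line_point
    edist_line_point_compare
  by unfold_locales blast+

lemma mu_line_point_image:
  assumes "0 < enorm d v" "finite U" "U \<noteq> {}"
  shows "mu (line_point a v ` U) = line_point a v (avg U)"
proof
  fix i
  have inj: "inj_on (line_point a v) U" using inj_line_point[OF assms(1)] by (rule inj_on_subset) simp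
  have "(\<Sum>y\<in>line_point a v ` U. y i) = (\<Sum>u\<in>U. a i + u * v i)"
    unfolding sum.reindex[OF inj] by (simp add: line_point_def)
  also have "\<dots> = real (card U) * a i + (\<Sum>U) * v i" by (simp add: sum.distrib sum_distrib_right)
  finally have "mu (line_point a v ` U) i = (real (card U) * a i + (\<Sum>U) * v i) / real (card U)"
    by (simp add: mu_def card_image[OF inj])
  moreover have "0 < real (card U)" using assms(2,3) by (simp add: card_gt_0_iff)
  ultimately show "mu (line_point a v ` U) i = line_point a v (avg U) i"
    by (simp add: line_point_def avg_def field_simps)
qed

lemma delta_line_point_image:
  assumes "0 < enorm d v" "finite U" "U \<noteq> {}"
  shows "delta d (line_point a v ` U) = enorm d v * (\<Sum>u\<in>U. \<bar>u - avg U\<bar>)"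
proof -
  have inj: "inj_on (line_point a v) U" using inj_line_point[OF assms(1)] by (rule inj_on_subset) simp
  show ?thesis
    by (simp add: delta_def mu_line_point_image[OF assms] sum.reindex[OF inj] edist_line_point
        sum_distrib_left)
qed

lemma segI_memI:
  assumes "x \<in> Y" "y \<in> Y" "0 \<le> t" "t \<le> 1"
  shows "(\<lambda>i. (1 - t) * x i + t * y i) \<in> segI Y"
  unfolding segI_def
  by (rule CollectI, rule bexI[OF _ assms(1)], rule bexI[OF _ assms(2)], rule bexI[of _ t]) (use assms in auto)

lemma subset_segI: "Y \<subseteq> segI Y"
  using segI_memI[of _ Y _ 0] by fastforce

lemma segI_line_point_image:
  assumes "finite U" "U \<noteq> {}"
  shows "segI (line_point a v ` U) = line_point a v ` {Min U..Max U}"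
proof
  show "segI (line_point a v ` U) \<subseteq> line_point a v ` {Min U..Max U}"
  proof
    fix x assume "x \<in> segI (line_point a v ` U)"
    then obtain u w t where uw: "u \<in> U" "w \<in> U" "0 \<le> t" "t \<le> 1"
      and x: "x = (\<lambda>i. (1 - t) * line_point a v u i + t * line_point a v w i)"
      unfolding segI_def by auto
    have "Min U \<le> u" "u \<le> Max U" "Min U \<le> w" "w \<le> Max U" using uw assms by auto
    then have "(1 - t) * Min U + t * Min U \<le> (1 - t) * u + t * w"
      "(1 - t) * u + t * w \<le> (1 - t) * Max U + t * Max U"
      using uw by (intro add_mono mult_left_mono; simp)+
    moreover have "x = line_point a v ((1 - t) * u + t * w)"
      unfolding x line_point_convex_combination ..
    ultimately show "x \<in> line_point a v ` {Min U..Max U}" by (simp add: algebra_simps)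
  qed
  show "line_point a v ` {Min U..Max U} \<subseteq> segI (line_point a v ` U)"
  proof
    fix x assume "x \<in> line_point a v ` {Min U..Max U}"
    then obtain z where z: "Min U \<le> z" "z \<le> Max U" and x: "x = line_point a v z" by auto
    define t where "t = (if Min U = Max U then 0 else (z - Min U) / (Max U - Min U))"
    have "0 \<le> t" "t \<le> 1" using z by (auto simp: t_def field_simps)
    moreover have "z = (1 - t) * Min U + t * Max U"
      using z by (auto simp: t_def field_simps)
    moreover have "line_point a v (Min U) \<in> line_point a v ` U" "line_point a v (Max U) \<in> line_point a v ` U"
      using assms by auto
    moreover have "x = (\<lambda>i. (1 - t) * line_point a v (Min U) i + t * line_point a v (Max U) i)"
      unfolding x \<open>z = (1 - t) * Min U + t * Max U\<close> by (rule line_point_convex_combination)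
    ultimately show "x \<in> segI (line_point a v ` U)" by (simp add: segI_memI)
  qed
qed

lemma seglen_line_segment_ge:
  assumes "lo \<le> hi"
  shows "enorm d v * (hi - lo) \<le> seglen d (line_point a v ` {lo..hi})"
proof -
  let ?S = "line_point a v ` {lo..hi}"
  have "0 \<le> enorm d v" by (simp add: enorm_def sum_nonneg)
  then have bound: "edist d x y \<le> enorm d v * (hi - lo)" if "x \<in> ?S" "y \<in> ?S" for x y
    using that by (auto simp: edist_line_point intro!: mult_left_mono)
  have bdd: "bdd_above (edist d x ` ?S)" if "x \<in> ?S" for x
    by (rule bdd_aboveI2) (rule bound[OF that])
  have "(SUP y\<in>?S. edist d x y) \<le> enorm d v * (hi - lo)" if "x \<in> ?S" for x
    using bound[OF that] assms by (intro cSUP_least) auto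
  then have bdd2: "bdd_above ((\<lambda>x. SUP y\<in>?S. edist d x y) ` ?S)" by (rule bdd_aboveI2)
  have hi: "line_point a v hi \<in> ?S" and lo: "line_point a v lo \<in> ?S" using assms by auto
  have "enorm d v * (hi - lo) = edist d (line_point a v hi) (line_point a v lo)"
    using assms by (simp add: edist_line_point)
  also have "\<dots> \<le> (SUP y\<in>?S. edist d (line_point a v hi) y)" by (rule cSUP_upper[OF lo bdd[OF hi]])
  also have "\<dots> \<le> (SUP x\<in>?S. SUP y\<in>?S. edist d x y)" by (rule cSUP_upper[OF hi bdd2])
  finally show ?thesis unfolding seglen_def .
qed

lemma line_cluster_parameters:
  assumes "0 < enorm d v" "Y \<subseteq> range (line_point a v)" "finite Y" "Y \<noteq> {}"
  defines "U \<equiv> line_point a v -` Y"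
  shows "line_point a v ` U = Y" "finite U" "U \<noteq> {}"
    and "segI Y = line_point a v ` {Min U..Max U}"
    and "mu Y = line_point a v (avg U)"
    and "delta d Y = enorm d v * (\<Sum>u\<in>U. \<bar>u - avg U\<bar>)"
    and "enorm d v * (Max U - Min U) \<le> seglen d (segI Y)"
proof -
  show image: "line_point a v ` U = Y" using assms(2) by (auto simp: U_def)
  show "finite U" using finite_vimageI[OF assms(3) inj_line_point[OF assms(1)]] by (simp add: U_def)
  show "U \<noteq> {}" using image assms(4) by auto
  show segI: "segI Y = line_point a v ` {Min U..Max U}"
    using segI_line_point_image[OF \<open>finite U\<close> \<open>U \<noteq> {}\<close>, of a v] unfolding image .
  show "mu Y = line_point a v (avg U)"
    using mu_line_point_image[OF assms(1) \<open>finite U\<close> \<open>U \<noteq> {}\<close>, of a] unfolding image .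
  show "delta d Y = enorm d v * (\<Sum>u\<in>U. \<bar>u - avg U\<bar>)"
    using delta_line_point_image[OF assms(1) \<open>finite U\<close> \<open>U \<noteq> {}\<close>, of a] unfolding image .
  show "enorm d v * (Max U - Min U) \<le> seglen d (segI Y)"
    unfolding segI using \<open>finite U\<close> \<open>U \<noteq> {}\<close> by (intro seglen_line_segment_ge) simp
qed

lemma mu_in_segI:
  assumes "is_line d l" "Y \<subseteq> l" "finite Y" "Y \<noteq> {}"
  shows "mu Y \<in> segI Y"
proof -
  obtain a v where l: "l = range (line_point a v)" "0 < enorm d v"
    using assms(1) by (rule is_line_parametrization)
  note U = line_cluster_parameters[OF l(2) assms(2)[unfolded l(1)] assms(3,4)]
  show ?thesis unfolding U(4,5) using avg_bounds[OF U(2,3)] by simp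
qed

lemma segI_threshold_crossing:
  assumes "finite C" "C \<noteq> {}" "x \<in> Y" "y \<in> Y" "distC d y C \<le> r" "r \<le> distC d x C"
  shows "\<exists>z\<in>segI Y. \<exists>c\<in>C. edist d z c = r"
proof -
  obtain c where c: "c \<in> C" "distC d y C = edist d y c" using distC_attained[OF assms(1,2)] by blast
  define f where "f t = edist d (\<lambda>i. (1 - t) * x i + t * y i) c" for t
  have "f 1 \<le> r" "r \<le> f 0"
    using c assms(5,6) distC_le[OF assms(1) c(1), of d x] by (simp_all add: f_def)
  moreover have "continuous_on {0..1} f" unfolding f_def edist_def by (intro continuous_intros)
  ultimately obtain t where "0 \<le> t" "t \<le> 1" "f t = r" using IVT2'[of f 1 r 0] by auto
  moreover from this have "(\<lambda>i. (1 - t) * x i + t * y i) \<in> segI Y"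
    using assms(3,4) by (simp add: segI_memI)
  ultimately show ?thesis using c(1) unfolding f_def by blast
qed

lemma line_clusters_error_le:
  fixes Ys :: "pt set set" and w T r :: real
  assumes "is_line d l" "finite C" "C \<noteq> {}" "finite Ys"
    and Ys: "\<And>Y. Y \<in> Ys \<Longrightarrow> finite Y \<and> Y \<noteq> {} \<and> Y \<subseteq> l"
    and disjoint: "\<And>Y Y'. Y \<in> Ys \<Longrightarrow> Y' \<in> Ys \<Longrightarrow> Y \<noteq> Y' \<Longrightarrow> segI Y \<inter> segI Y' = {}"
    and threshold: "\<And>Y. Y \<in> Ys \<Longrightarrow> S \<inter> Y \<noteq> {} \<Longrightarrow> \<not> Y \<subseteq> S \<Longrightarrow> \<exists>z\<in>segI Y. \<exists>c\<in>C. edist d z c = r"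
    and small: "\<And>Y. Y \<in> Ys \<Longrightarrow> seglen d (segI Y) \<le> w \<or> delta d Y \<le> T"
    and "0 \<le> w" "0 \<le> T"
  shows "(\<Sum>Y\<in>Ys. \<bar>\<Sum>x\<in>S \<inter> Y. distC d x C - distC d (mu Y) C\<bar>)
           \<le> (\<Sum>Y\<in>Ys. card (S \<inter> Y) * w) + 4 * card C * T"
proof -
  obtain a v where l: "l = range (line_point a v)" "0 < enorm d v"
    using assms(1) by (rule is_line_parametrization)
  define \<phi> where "\<phi> = line_point a v"
  define U where "U Y = \<phi> -` Y" for Y
  define SU where "SU Y = \<phi> -` (S \<inter> Y)" for Y
  have inj: "inj_on \<phi> A" for A unfolding \<phi>_def using inj_line_point[OF l(2)] by (rule inj_on_subset) simp
  have U: "\<phi> ` U Y = Y" "finite (U Y)" "U Y \<noteq> {}" "segI Y = \<phi> ` {Min (U Y)..Max (U Y)}"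
    "mu Y = \<phi> (avg (U Y))" "delta d Y = enorm d v * (\<Sum>u\<in>U Y. \<bar>u - avg (U Y)\<bar>)"
    "enorm d v * (Max (U Y) - Min (U Y)) \<le> seglen d (segI Y)" if "Y \<in> Ys" for Y
    using line_cluster_parameters[OF l(2), of Y] Ys[OF that] l(1) unfolding U_def \<phi>_def by auto
  have SU: "S \<inter> Y = \<phi> ` SU Y" "SU Y \<subseteq> U Y" if "Y \<in> Ys" for Y
    using Ys[OF that] l(1) by (auto simp: SU_def U_def \<phi>_def image_vimage_eq)
  interpret lower_envelope C "\<lambda>c u. edist d (\<phi> u) c" "enorm d v"
    unfolding \<phi>_def by (rule lower_envelope_line[OF l(2) assms(2,3)])
  have cluster: "(\<Sum>x\<in>S \<inter> Y. distC d x C - distC d (mu Y) C) = (\<Sum>u\<in>SU Y. env u - env (avg (U Y)))"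
    and card: "card (S \<inter> Y) = card (SU Y)" if "Y \<in> Ys" for Y
    unfolding SU(1)[OF that] U(5)[OF that] sum.reindex[OF inj] card_image[OF inj]
    by (simp_all add: env_def distC_def)
  have "(\<Sum>Y\<in>Ys. \<bar>\<Sum>u\<in>SU Y. env u - env (avg (U Y))\<bar>) \<le> (\<Sum>Y\<in>Ys. card (SU Y) * w) + 4 * card C * T"
  proof (rule envelope_error_le[where r = r])
    show "{Min (U Y)..Max (U Y)} \<inter> {Min (U Y')..Max (U Y')} = {}"
      if "Y \<in> Ys" "Y' \<in> Ys" "Y \<noteq> Y'" for Y Y'
      using disjoint[OF that] U(4)[OF that(1)] U(4)[OF that(2)] by blast
    show "\<exists>c\<in>C. \<exists>u\<in>{Min (U Y)..Max (U Y)}. edist d (\<phi> u) c = r"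
      if Y: "Y \<in> Ys" and partial: "SU Y \<noteq> {}" "SU Y \<noteq> U Y" for Y
    proof -
      have "S \<inter> Y \<noteq> {}" "\<not> Y \<subseteq> S" using partial by (auto simp: SU_def U_def)
      then obtain z c where "z \<in> segI Y" "c \<in> C" "edist d z c = r" using threshold[OF Y] by blast
      then show ?thesis using U(4)[OF Y] by auto
    qed
    show "enorm d v * (Max (U Y) - Min (U Y)) \<le> w \<or> enorm d v * (\<Sum>u\<in>U Y. \<bar>u - avg (U Y)\<bar>) \<le> T"
      if "Y \<in> Ys" for Y
      using small[OF that] U(6,7)[OF that] by linarith
  qed (use assms(4) U SU \<open>0 \<le> w\<close> \<open>0 \<le> T\<close> in auto)
  then show ?thesis using cluster card by simp
qed

section \<open>Clusters on finitely many lines\<close>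

lemma mset_set_UN_disjoint:
  assumes "finite A" "\<And>a. a \<in> A \<Longrightarrow> finite (B a)"
    and "\<And>a a'. a \<in> A \<Longrightarrow> a' \<in> A \<Longrightarrow> a \<noteq> a' \<Longrightarrow> B a \<inter> B a' = {}"
  shows "mset_set (\<Union>a\<in>A. B a) = (\<Sum>a\<in>A. mset_set (B a))"
  using assms
proof (induction A rule: finite_induct)
  case (insert x F)
  then have "mset_set (B x \<union> (\<Union>a\<in>F. B a)) = mset_set (B x) + mset_set (\<Union>a\<in>F. B a)"
    by (intro mset_set_Union) auto
  with insert show ?case by simp
qed simp

lemma image_mset_sum: "image_mset f (\<Sum>a\<in>A. M a) = (\<Sum>a\<in>A. image_mset f (M a))"
  by (induction A rule: infinite_finite_induct) auto

locale line_clustering =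
  fixes d :: nat and X :: "pt set" and L :: "pt set set"
    and Xl :: "pt set \<Rightarrow> pt set" and Ys :: "pt set \<Rightarrow> pt set set"
  assumes finite_X: "finite X" and finite_L: "finite L"
    and lines: "\<And>l. l \<in> L \<Longrightarrow> is_line d l"
    and cover: "(\<Union>l\<in>L. Xl l) = X"
    and on_line: "\<And>l. l \<in> L \<Longrightarrow> Xl l \<subseteq> l"
    and lines_disjoint: "\<And>l l'. l \<in> L \<Longrightarrow> l' \<in> L \<Longrightarrow> l \<noteq> l' \<Longrightarrow> Xl l \<inter> Xl l' = {}"
    and clusters_cover: "\<And>l. l \<in> L \<Longrightarrow> \<Union>(Ys l) = Xl l"
    and clusters_nonempty: "\<And>l Y. l \<in> L \<Longrightarrow> Y \<in> Ys l \<Longrightarrow> Y \<noteq> {}"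
    and segments_disjoint: "\<And>l Y Y'. l \<in> L \<Longrightarrow> Y \<in> Ys l \<Longrightarrow> Y' \<in> Ys l \<Longrightarrow> Y \<noteq> Y' \<Longrightarrow>
                             segI Y \<inter> segI Y' = {}"
begin

lemma finite_Xl: "l \<in> L \<Longrightarrow> finite (Xl l)"
  using finite_subset[OF _ finite_X] cover by blast

lemma cluster_subset: "l \<in> L \<Longrightarrow> Y \<in> Ys l \<Longrightarrow> Y \<subseteq> Xl l"
  using clusters_cover by blast

lemma finite_cluster: "l \<in> L \<Longrightarrow> Y \<in> Ys l \<Longrightarrow> finite Y"
  using finite_subset[OF cluster_subset finite_Xl] .

lemma finite_Ys: "l \<in> L \<Longrightarrow> finite (Ys l)"
proof -
  assume "l \<in> L"
  then have "Ys l \<subseteq> Pow (Xl l)" using cluster_subset by blast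
  then show ?thesis using finite_Xl[OF \<open>l \<in> L\<close>] by (simp add: finite_subset)
qed

lemma clusters_disjoint:
  "l \<in> L \<Longrightarrow> Y \<in> Ys l \<Longrightarrow> Y' \<in> Ys l \<Longrightarrow> Y \<noteq> Y' \<Longrightarrow> Y \<inter> Y' = {}"
  using segments_disjoint[of l Y Y'] subset_segI[of Y] subset_segI[of Y'] by blast

definition cluster :: "pt \<Rightarrow> pt set" where
  "cluster x = (THE Y. \<exists>l\<in>L. Y \<in> Ys l \<and> x \<in> Y)"

lemma cluster_eq:
  assumes "l \<in> L" "Y \<in> Ys l" "x \<in> Y"
  shows "cluster x = Y"
  unfolding cluster_def
proof (rule the_equality)
  fix Y' assume "\<exists>l'\<in>L. Y' \<in> Ys l' \<and> x \<in> Y'"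
  then obtain l' where l': "l' \<in> L" "Y' \<in> Ys l'" "x \<in> Y'" by blast
  have "x \<in> Xl l'" "x \<in> Xl l"
    using cluster_subset[OF l'(1,2)] l'(3) cluster_subset[OF assms(1,2)] assms(3) by blast+
  then have "l' = l" using lines_disjoint[OF l'(1) assms(1)] by blast
  then show "Y' = Y" using clusters_disjoint[OF assms(1) l'(2)[unfolded \<open>l' = l\<close>] assms(2)] l'(3) assms(3)
    by blast
qed (use assms in blast)

lemma sum_over_clusters:
  assumes "S \<subseteq> X"
  shows "(\<Sum>x\<in>S. f x) = (\<Sum>l\<in>L. \<Sum>Y\<in>Ys l. \<Sum>x\<in>S \<inter> Y. f x)"
proof -
  have "finite S" using assms finite_X finite_subset by blast
  have "S = (\<Union>l\<in>L. S \<inter> Xl l)" using assms cover by blast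
  then have "(\<Sum>x\<in>S. f x) = (\<Sum>l\<in>L. \<Sum>x\<in>S \<inter> Xl l. f x)"
    using sum.UNION_disjoint[OF finite_L, of "\<lambda>l. S \<inter> Xl l" f] \<open>finite S\<close> lines_disjoint by auto
  also have "\<dots> = (\<Sum>l\<in>L. \<Sum>Y\<in>Ys l. \<Sum>x\<in>S \<inter> Y. f x)"
  proof (rule sum.cong[OF refl])
    fix l assume l: "l \<in> L"
    have "S \<inter> Xl l = (\<Union>Y\<in>Ys l. S \<inter> Y)" using clusters_cover[OF l] by blast
    then show "(\<Sum>x\<in>S \<inter> Xl l. f x) = (\<Sum>Y\<in>Ys l. \<Sum>x\<in>S \<inter> Y. f x)"
      using sum.UNION_disjoint[OF finite_Ys[OF l], of "\<lambda>Y. S \<inter> Y" f] \<open>finite S\<close>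
        clusters_disjoint[OF l] by auto
  qed
  finally show ?thesis .
qed

lemma cluster_means_eq_image_mset:
  "(\<Sum>l\<in>L. \<Sum>Y\<in>Ys l. replicate_mset (card Y) (mu Y)) = image_mset (mu \<circ> cluster) (mset_set X)"
proof -
  have "mset_set X = (\<Sum>l\<in>L. mset_set (Xl l))"
    using mset_set_UN_disjoint[OF finite_L, of Xl] finite_Xl lines_disjoint cover by auto
  also have "\<dots> = (\<Sum>l\<in>L. \<Sum>Y\<in>Ys l. mset_set Y)"
  proof (rule sum.cong[OF refl])
    fix l assume l: "l \<in> L"
    have "mset_set (Xl l) = mset_set (\<Union>Y\<in>Ys l. Y)" using clusters_cover[OF l] by simp
    also have "\<dots> = (\<Sum>Y\<in>Ys l. mset_set Y)"
      using finite_cluster[OF l] clusters_disjoint[OF l] by (intro mset_set_UN_disjoint[OF finite_Ys[OF l]])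
    finally show "mset_set (Xl l) = (\<Sum>Y\<in>Ys l. mset_set Y)" .
  qed
  finally have "image_mset (mu \<circ> cluster) (mset_set X)
      = (\<Sum>l\<in>L. \<Sum>Y\<in>Ys l. image_mset (mu \<circ> cluster) (mset_set Y))"
    by (simp add: image_mset_sum)
  also have "\<dots> = (\<Sum>l\<in>L. \<Sum>Y\<in>Ys l. replicate_mset (card Y) (mu Y))"
  proof (intro sum.cong refl)
    fix l Y assume "l \<in> L" "Y \<in> Ys l"
    then have "image_mset (mu \<circ> cluster) (mset_set Y) = image_mset (\<lambda>_. mu Y) (mset_set Y)"
      using cluster_eq finite_cluster by (intro image_mset_cong) auto
    then show "image_mset (mu \<circ> cluster) (mset_set Y) = replicate_mset (card Y) (mu Y)"
      by (simp add: image_mset_const_eq)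
  qed
  finally show ?thesis ..
qed

lemma clusters_error_le:
  fixes w r :: real and T :: "pt set \<Rightarrow> real"
  assumes "finite C" "C \<noteq> {}" "S \<subseteq> X"
    and threshold: "\<And>l Y. l \<in> L \<Longrightarrow> Y \<in> Ys l \<Longrightarrow> S \<inter> Y \<noteq> {} \<Longrightarrow> \<not> Y \<subseteq> S \<Longrightarrow>
                      \<exists>z\<in>segI Y. \<exists>c\<in>C. edist d z c = r"
    and small: "\<And>l Y. l \<in> L \<Longrightarrow> Y \<in> Ys l \<Longrightarrow> seglen d (segI Y) \<le> w \<or> delta d Y \<le> T l"
    and "0 \<le> w" "\<And>l. l \<in> L \<Longrightarrow> 0 \<le> T l"
  shows "\<bar>\<Sum>x\<in>S. distC d x C - distC d (mu (cluster x)) C\<bar> \<le> card S * w + 4 * card C * (\<Sum>l\<in>L. T l)"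
proof -
  define err where "err Y = (\<Sum>x\<in>S \<inter> Y. distC d x C - distC d (mu Y) C)" for Y
  have "(\<Sum>x\<in>S. distC d x C - distC d (mu (cluster x)) C) = (\<Sum>l\<in>L. \<Sum>Y\<in>Ys l. err Y)"
    unfolding sum_over_clusters[OF assms(3)] err_def using cluster_eq by (intro sum.cong refl) auto
  then have "\<bar>\<Sum>x\<in>S. distC d x C - distC d (mu (cluster x)) C\<bar> \<le> (\<Sum>l\<in>L. \<bar>\<Sum>Y\<in>Ys l. err Y\<bar>)"
    by (simp only: sum_abs)
  also have "\<dots> \<le> (\<Sum>l\<in>L. \<Sum>Y\<in>Ys l. \<bar>err Y\<bar>)" by (intro sum_mono sum_abs)
  also have "\<dots> \<le> (\<Sum>l\<in>L. (\<Sum>Y\<in>Ys l. card (S \<inter> Y) * w) + 4 * card C * T l)"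
  proof (rule sum_mono)
    fix l assume l: "l \<in> L"
    show "(\<Sum>Y\<in>Ys l. \<bar>err Y\<bar>) \<le> (\<Sum>Y\<in>Ys l. card (S \<inter> Y) * w) + 4 * card C * T l"
      unfolding err_def
    proof (rule line_clusters_error_le[OF lines[OF l] assms(1,2) finite_Ys[OF l]])
      show "finite Y \<and> Y \<noteq> {} \<and> Y \<subseteq> l" if "Y \<in> Ys l" for Y
        using finite_cluster[OF l that] clusters_nonempty[OF l that] cluster_subset[OF l that] on_line[OF l]
        by blast
      show "segI Y \<inter> segI Y' = {}" if "Y \<in> Ys l" "Y' \<in> Ys l" "Y \<noteq> Y'" for Y Y'
        using segments_disjoint[OF l that] .
      show "\<exists>z\<in>segI Y. \<exists>c\<in>C. edist d z c = r" if "Y \<in> Ys l" "S \<inter> Y \<noteq> {}" "\<not> Y \<subseteq> S" for Y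
        using threshold[OF l that] .
      show "seglen d (segI Y) \<le> w \<or> delta d Y \<le> T l" if "Y \<in> Ys l" for Y
        using small[OF l that] .
      show "0 \<le> w" "0 \<le> T l" using \<open>0 \<le> w\<close> assms(7)[OF l] by simp_all
    qed
  qed
  also have "\<dots> = card S * w + 4 * card C * (\<Sum>l\<in>L. T l)"
  proof -
    have "real (card S) = (\<Sum>l\<in>L. \<Sum>Y\<in>Ys l. real (card (S \<inter> Y)))"
      using sum_over_clusters[OF assms(3), of "\<lambda>_. 1 :: real"] by simp
    then show ?thesis by (simp add: sum.distrib sum_distrib_left sum_distrib_right)
  qed
  finally show ?thesis .
qed

lemma top_set_threshold:
  assumes "finite C" "C \<noteq> {}"
    and top: "top_set p (\<lambda>x. distC d x C) X S \<or> top_set p (\<lambda>x. distC d (mu (cluster x)) C) X S"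
  obtains r where "\<And>l Y. l \<in> L \<Longrightarrow> Y \<in> Ys l \<Longrightarrow> S \<inter> Y \<noteq> {} \<Longrightarrow> \<not> Y \<subseteq> S \<Longrightarrow>
                     \<exists>z\<in>segI Y. \<exists>c\<in>C. edist d z c = r"
proof -
  obtain g where g: "g = (\<lambda>x. distC d x C) \<or> g = (\<lambda>x. distC d (mu (cluster x)) C)"
    and "top_set p g X S"
    using top by blast
  then obtain r where r: "S \<subseteq> X" "\<forall>x\<in>S. r \<le> g x" "\<forall>x\<in>X - S. g x \<le> r"
    unfolding top_set_def by blast
  have "\<exists>z\<in>segI Y. \<exists>c\<in>C. edist d z c = r"
    if Y: "l \<in> L" "Y \<in> Ys l" and partial: "S \<inter> Y \<noteq> {}" "\<not> Y \<subseteq> S" for l Y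
  proof -
    obtain x y where xy: "x \<in> S \<inter> Y" "y \<in> Y - S" using partial by blast
    have "Y \<subseteq> X" using cluster_subset[OF Y] cover Y(1) by auto
    then have th: "g y \<le> r" "r \<le> g x" using r xy by auto
    show ?thesis
      using g
    proof
      assume "g = (\<lambda>x. distC d x C)"
      then show ?thesis using segI_threshold_crossing[OF assms(1,2)] xy th by blast
    next
      assume "g = (\<lambda>x. distC d (mu (cluster x)) C)"
      then have "distC d (mu Y) C = r" using th xy cluster_eq[OF Y] by auto
      moreover obtain c where "c \<in> C" "distC d (mu Y) C = edist d (mu Y) c"
        using distC_attained[OF assms(1,2)] by blast
      moreover have "mu Y \<in> segI Y"
        using mu_in_segI[OF lines[OF Y(1)]] cluster_subset[OF Y] on_line[OF Y(1)]
          finite_cluster[OF Y] clusters_nonempty[OF Y] by blast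
      ultimately show ?thesis by metis
    qed
  qed
  then show ?thesis using that by blast
qed

theorem costp_cluster_means_diff_le:
  fixes w :: real and T :: "pt set \<Rightarrow> real"
  assumes "finite C" "C \<noteq> {}" "0 < p" "p \<le> card X"
    and small: "\<And>l Y. l \<in> L \<Longrightarrow> Y \<in> Ys l \<Longrightarrow> seglen d (segI Y) \<le> w \<or> delta d Y \<le> T l"
    and "0 \<le> w" "\<And>l. l \<in> L \<Longrightarrow> 0 \<le> T l"
  shows "\<bar>costp d p (\<Sum>l\<in>L. \<Sum>Y\<in>Ys l. replicate_mset (card Y) (mu Y)) C - costp d p (mset_set X) C\<bar>
           \<le> p * w + 4 * card C * (\<Sum>l\<in>L. T l)"
proof -
  let ?a = "\<lambda>x. distC d x C" and ?b = "\<lambda>x. distC d (mu (cluster x)) C"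
  have costp: "costp d p M C = top_sum p ?a M" for M by (simp add: costp_def top_sum_def)
  have "\<bar>top_sum p ?b (mset_set X) - top_sum p ?a (mset_set X)\<bar> \<le> p * w + 4 * card C * (\<Sum>l\<in>L. T l)"
  proof (rule top_sum_diff_le[OF finite_X assms(3,4)])
    fix S assume top: "top_set p ?b X S \<or> top_set p ?a X S"
    then have "S \<subseteq> X" "card S = p" by (auto simp: top_set_def)
    obtain r where "\<And>l Y. l \<in> L \<Longrightarrow> Y \<in> Ys l \<Longrightarrow> S \<inter> Y \<noteq> {} \<Longrightarrow> \<not> Y \<subseteq> S \<Longrightarrow>
                      \<exists>z\<in>segI Y. \<exists>c\<in>C. edist d z c = r"
      using top_set_threshold[OF assms(1,2)] top by blast
    from clusters_error_le[OF assms(1,2) \<open>S \<subseteq> X\<close> this small assms(6,7)]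
    show "\<bar>\<Sum>x\<in>S. ?b x - ?a x\<bar> \<le> p * w + 4 * card C * (\<Sum>l\<in>L. T l)"
      using \<open>card S = p\<close> by (simp add: sum_subtractf abs_minus_commute)
  qed
  then show ?thesis
    unfolding costp cluster_means_eq_image_mset top_sum_image_mset by (simp add: o_def)
qed

end

theorem lemma4p1:
  "\<forall>\<alpha>::real. \<alpha> > 0 \<longrightarrow> (\<exists>\<beta>::real. \<beta> > 0 \<and>
    (\<forall>(d::nat) (k::nat) (\<epsilon>::real) (X::pt set) (p::nat) (L::pt set set)
       (s::real) (t::pt set \<Rightarrow> real) (Xl::pt set \<Rightarrow> pt set) (Ys::pt set \<Rightarrow> pt set set)
       (C::pt set).
      k \<ge> 1 \<longrightarrow> 0 < \<epsilon> \<longrightarrow> \<epsilon> < 1 \<longrightarrow>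
      finite X \<longrightarrow> (\<forall>x\<in>X. in_Rd d x) \<longrightarrow>
      1 \<le> p \<longrightarrow> p \<le> card X \<longrightarrow>
      finite L \<longrightarrow> (\<forall>l\<in>L. is_line d l) \<longrightarrow>
      s > 0 \<longrightarrow> (\<forall>l\<in>L. t l > 0) \<longrightarrow>
      \<comment> \<open>(i) X is partitioned into the sets X_l, X_l on l\<close>
      (\<Union>l\<in>L. Xl l) = X \<longrightarrow>
      (\<forall>l\<in>L. Xl l \<subseteq> l) \<longrightarrow>
      (\<forall>l\<in>L. \<forall>l'\<in>L. l \<noteq> l' \<longrightarrow> Xl l \<inter> Xl l' = {}) \<longrightarrow>
      \<comment> \<open>(ii) each X_l is partitioned into sub-intervals with disjoint segments\<close>
      (\<forall>l\<in>L. \<Union>(Ys l) = Xl l \<and> (\<forall>Y\<in>Ys l. Y \<noteq> {}) \<and>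
         (\<forall>Y\<in>Ys l. \<forall>Y'\<in>Ys l. Y \<noteq> Y' \<longrightarrow> segI Y \<inter> segI Y' = {}) \<and>
         (\<forall>Y\<in>Ys l. seglen d (segI Y) \<le> \<alpha> * \<epsilon> / real p * s
                    \<or> delta d Y \<le> \<alpha> * \<epsilon> / real k * t l)) \<longrightarrow>
      finite C \<longrightarrow> card C = k \<longrightarrow> (\<forall>c\<in>C. in_Rd d c) \<longrightarrow>
      \<bar>costp d p (\<Sum>l\<in>L. \<Sum>Y\<in>Ys l. replicate_mset (card Y) (mu Y)) C
        - costp d p (mset_set X) C\<bar>
        \<le> \<beta> * \<epsilon> * (s + (\<Sum>l\<in>L. t l))))"
proof (intro allI impI exI conjI)
  fix \<alpha> :: real assume "\<alpha> > 0"
  show "0 < 5 * \<alpha>" using \<open>\<alpha> > 0\<close> by simp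
  fix d k \<epsilon> X p L s t Xl Ys C
  assume "k \<ge> 1" "0 < \<epsilon>" "\<epsilon> < 1" "finite X" "\<forall>x\<in>X. in_Rd d x" "1 \<le> p" "p \<le> card X"
    and lines: "finite L" "\<forall>l\<in>L. is_line d l" and "s > 0" "\<forall>l\<in>L. t l > 0"
    and partition: "(\<Union>l\<in>L. Xl l) = X" "\<forall>l\<in>L. Xl l \<subseteq> l"
      "\<forall>l\<in>L. \<forall>l'\<in>L. l \<noteq> l' \<longrightarrow> Xl l \<inter> Xl l' = {}"
    and clusters: "\<forall>l\<in>L. \<Union>(Ys l) = Xl l \<and> (\<forall>Y\<in>Ys l. Y \<noteq> {}) \<and>
       (\<forall>Y\<in>Ys l. \<forall>Y'\<in>Ys l. Y \<noteq> Y' \<longrightarrow> segI Y \<inter> segI Y' = {}) \<and>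
       (\<forall>Y\<in>Ys l. seglen d (segI Y) \<le> \<alpha> * \<epsilon> / real p * s \<or> delta d Y \<le> \<alpha> * \<epsilon> / real k * t l)"
    and "finite C" "card C = k" "\<forall>c\<in>C. in_Rd d c"
  interpret line_clustering d X L Xl Ys
    using \<open>finite X\<close> lines partition clusters by unfold_locales simp_all
  let ?D = "\<Sum>l\<in>L. \<Sum>Y\<in>Ys l. replicate_mset (card Y) (mu Y)"
  have "\<bar>costp d p ?D C - costp d p (mset_set X) C\<bar>
      \<le> p * (\<alpha> * \<epsilon> / p * s) + 4 * card C * (\<Sum>l\<in>L. \<alpha> * \<epsilon> / k * t l)"
  proof (rule costp_cluster_means_diff_le)
    show "C \<noteq> {}" using \<open>card C = k\<close> \<open>k \<ge> 1\<close> by auto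
    show "seglen d (segI Y) \<le> \<alpha> * \<epsilon> / p * s \<or> delta d Y \<le> \<alpha> * \<epsilon> / k * t l"
      if "l \<in> L" "Y \<in> Ys l" for l Y
      using clusters that by blast
    show "0 \<le> \<alpha> * \<epsilon> / k * t l" if "l \<in> L" for l
      using \<open>\<alpha> > 0\<close> \<open>0 < \<epsilon>\<close> \<open>\<forall>l\<in>L. t l > 0\<close> that by (simp add: less_imp_le)
  qed (use \<open>finite C\<close> \<open>1 \<le> p\<close> \<open>p \<le> card X\<close> \<open>\<alpha> > 0\<close> \<open>0 < \<epsilon>\<close> \<open>s > 0\<close> in simp_all)
  also have "\<dots> = \<alpha> * \<epsilon> * s + 4 * (\<alpha> * \<epsilon>) * (\<Sum>l\<in>L. t l)"
    using \<open>card C = k\<close> \<open>k \<ge> 1\<close> \<open>1 \<le> p\<close> by (simp add: sum_distrib_left mult.assoc)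
  also have "\<dots> \<le> 5 * \<alpha> * \<epsilon> * (s + (\<Sum>l\<in>L. t l))"
    using \<open>\<alpha> > 0\<close> \<open>0 < \<epsilon>\<close> \<open>s > 0\<close> \<open>\<forall>l\<in>L. t l > 0\<close>
    by (simp add: algebra_simps sum_nonneg less_imp_le)
  finally show "\<bar>costp d p ?D C - costp d p (mset_set X) C\<bar> \<le> 5 * \<alpha> * \<epsilon> * (s + (\<Sum>l\<in>L. t l))" .
qed

end
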